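(* Let $\Gamma$ be a (finite or infinite) bipartite graph with $|V(\Gamma)|\geq 4$. The following are equivalent: (1) $\Gamma$ is a discrete half graph; (2) $P_5\not\leq\Gamma$ and $\Gamma$ is critical.
   Context: A bipartite graph $\Gamma$ with bipartition $\{X,Y\}$ is a half graph if there exist a linear order $L$ on $X$ and a bijection $\varphi:X\to Y$ such that $E(\Gamma)=\{\{x,\varphi(x')\}: x\leq x' \bmod L\}$; such $L$ is unique. A linear order $L$ is discrete if every element that is not the smallest has a predecessor and every element that is not the largest has a successor. A half graph is discrete if the linear order $L$ above is discrete. $P_5$ is the path on 5 vertices; $G\leq H$ means $G$ is isomorphic to an induced subgraph of $H$. A module of a graph is a set $M$ of vertices such that each vertex outside $M$ is adjacent to all or none of $M$; $\emptyset$, $V(\Gamma)$ and singletons are trivial; $\Gamma$ is prime if $|V(\Gamma)|\geq 3$ and all its modules are trivial; a prime graph $\Gamma$ is critical if $\Gamma-v$ is not prime for every vertex $v$. *)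

theory Defs
  imports Main
begin

definition graph :: "'a set \<Rightarrow> ('a \<Rightarrow> 'a \<Rightarrow> bool) \<Rightarrow> bool" where
  "graph V E \<longleftrightarrow> (\<forall>u v. E u v \<longrightarrow> u \<in> V \<and> v \<in> V \<and> u \<noteq> v \<and> E v u)"

definition bipartite :: "'a set \<Rightarrow> ('a \<Rightarrow> 'a \<Rightarrow> bool) \<Rightarrow> bool" where
  "bipartite V E \<longleftrightarrow> (\<exists>X Y. X \<inter> Y = {} \<and> X \<union> Y = V \<and>
      (\<forall>u\<in>X. \<forall>v\<in>X. \<not> E u v) \<and> (\<forall>u\<in>Y. \<forall>v\<in>Y. \<not> E u v))"

definition discrete_order :: "'a set \<Rightarrow> 'a rel \<Rightarrow> bool" where
  "discrete_order X r \<longleftrightarrow>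
     (\<forall>x\<in>X. (\<exists>y\<in>X. (y, x) \<in> r \<and> y \<noteq> x) \<longrightarrow>
        (\<exists>p\<in>X. (p, x) \<in> r \<and> p \<noteq> x \<and>
           \<not> (\<exists>z\<in>X. (p, z) \<in> r \<and> (z, x) \<in> r \<and> z \<noteq> p \<and> z \<noteq> x))) \<and>
     (\<forall>x\<in>X. (\<exists>y\<in>X. (x, y) \<in> r \<and> y \<noteq> x) \<longrightarrow>
        (\<exists>s\<in>X. (x, s) \<in> r \<and> s \<noteq> x \<and>
           \<not> (\<exists>z\<in>X. (x, z) \<in> r \<and> (z, s) \<in> r \<and> z \<noteq> x \<and> z \<noteq> s)))"

definition half_graph_wrt ::
  "'a set \<Rightarrow> ('a \<Rightarrow> 'a \<Rightarrow> bool) \<Rightarrow> 'a set \<Rightarrow> 'a set \<Rightarrow> 'a rel \<Rightarrow> ('a \<Rightarrow> 'a) \<Rightarrow> bool" where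
  "half_graph_wrt V E X Y r \<phi> \<longleftrightarrow>
     X \<inter> Y = {} \<and> X \<union> Y = V \<and> r \<subseteq> X \<times> X \<and> linear_order_on X r \<and>
     bij_betw \<phi> X Y \<and>
     (\<forall>u v. E u v \<longleftrightarrow> (\<exists>x\<in>X. \<exists>x'\<in>X. (x, x') \<in> r \<and>
                         ((u = x \<and> v = \<phi> x') \<or> (v = x \<and> u = \<phi> x'))))"

definition discrete_half_graph :: "'a set \<Rightarrow> ('a \<Rightarrow> 'a \<Rightarrow> bool) \<Rightarrow> bool" where
  "discrete_half_graph V E \<longleftrightarrow>
     (\<exists>X Y r \<phi>. half_graph_wrt V E X Y r \<phi> \<and> discrete_order X r)"

definition contains_induced_P5 :: "'a set \<Rightarrow> ('a \<Rightarrow> 'a \<Rightarrow> bool) \<Rightarrow> bool" where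
  "contains_induced_P5 V E \<longleftrightarrow>
     (\<exists>f :: nat \<Rightarrow> 'a. inj_on f {0..<5} \<and> f ` {0..<5} \<subseteq> V \<and>
        (\<forall>i<5. \<forall>j<5. E (f i) (f j) \<longleftrightarrow> (i = Suc j \<or> j = Suc i)))"

text \<open>Modules, primality and criticality. All notions only look at vertices in V,
so the induced subgraph Gamma - v is represented by (V - {v}, E).\<close>

definition module :: "'a set \<Rightarrow> ('a \<Rightarrow> 'a \<Rightarrow> bool) \<Rightarrow> 'a set \<Rightarrow> bool" where
  "module V E M \<longleftrightarrow> M \<subseteq> V \<and>
     (\<forall>v\<in>V - M. (\<forall>m\<in>M. E v m) \<or> (\<forall>m\<in>M. \<not> E v m))"

definition trivial_module :: "'a set \<Rightarrow> 'a set \<Rightarrow> bool" where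
  "trivial_module V M \<longleftrightarrow> M = {} \<or> M = V \<or> (\<exists>x. M = {x})"

definition prime_graph :: "'a set \<Rightarrow> ('a \<Rightarrow> 'a \<Rightarrow> bool) \<Rightarrow> bool" where
  "prime_graph V E \<longleftrightarrow> (infinite V \<or> 3 \<le> card V) \<and>
     (\<forall>M. module V E M \<longrightarrow> trivial_module V M)"

definition critical :: "'a set \<Rightarrow> ('a \<Rightarrow> 'a \<Rightarrow> bool) \<Rightarrow> bool" where
  "critical V E \<longleftrightarrow> prime_graph V E \<and> (\<forall>v\<in>V. \<not> prime_graph (V - {v}) E)"

end

theory Submission
  imports Defs
begin

text \<open>
In a half graph the neighbourhoods of vertices on the same side are nested, whereas the second and
fourth vertex of an induced P5 have a common neighbour and incomparable neighbourhoods. A module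
containing a vertex x together with its partner \<phi> x absorbs every other pair c, \<phi> c, so half graphs
are prime. Deleting x \<in> X leaves a nontrivial module exactly when x is the minimum (then \<phi> x becomes
isolated) or has an immediate predecessor p (then \<phi> p and \<phi> x become twins); otherwise every module
split by x still contains such a pair. Exchanging the two sides reverses the order, so deleting \<phi> x
is governed by immediate successors, and a half graph is critical iff its order is discrete.

Being prime, \<Gamma> is connected and has no twins,
and a walk between two vertices of the same side with incomparable neighbourhoods would produce an
induced P5; so the neighbourhoods on each side form a chain. Criticality gives every x \<in> X a private
neighbour \<phi> x, adjacent to no x' with a smaller neighbourhood. Then x' is adjacent to \<phi> x iff
N(x) \<subseteq> N(x'), and \<phi> is a bijection onto Y, so \<Gamma> is a half graph for the order x \<le> x' iff
N(x') \<subseteq> N(x), which is discrete by the first part.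
\<close>

section \<open>Graphs and induced paths\<close>

lemma graph_sym: "graph V E \<Longrightarrow> E u v \<Longrightarrow> E v u"
  unfolding graph_def by blast

lemma graph_vertices: "graph V E \<Longrightarrow> E u v \<Longrightarrow> u \<in> V \<and> v \<in> V"
  unfolding graph_def by blast

lemma graph_irrefl: "graph V E \<Longrightarrow> \<not> E u u"
  unfolding graph_def by blast

lemma contains_induced_P5_iff:
  assumes g: "graph V E"
  shows "contains_induced_P5 V E \<longleftrightarrow>
    (\<exists>p0 p1 p2 p3 p4. E p0 p1 \<and> E p1 p2 \<and> E p2 p3 \<and> E p3 p4 \<and>
       \<not> E p0 p2 \<and> \<not> E p0 p3 \<and> \<not> E p0 p4 \<and> \<not> E p1 p3 \<and> \<not> E p1 p4 \<and> \<not> E p2 p4)"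
    (is "_ \<longleftrightarrow> (\<exists>p0 p1 p2 p3 p4. ?path p0 p1 p2 p3 p4)")
proof
  assume "contains_induced_P5 V E"
  then obtain f :: "nat \<Rightarrow> 'a" where f: "\<forall>i<5. \<forall>j<5. E (f i) (f j) \<longleftrightarrow> (i = Suc j \<or> j = Suc i)"
    unfolding contains_induced_P5_def by blast
  have "?path (f 0) (f 1) (f 2) (f 3) (f 4)"
    using f[rule_format, of 0 1] f[rule_format, of 1 2] f[rule_format, of 2 3]
      f[rule_format, of 3 4] f[rule_format, of 0 2] f[rule_format, of 0 3]
      f[rule_format, of 0 4] f[rule_format, of 1 3] f[rule_format, of 1 4]
      f[rule_format, of 2 4]
    by simp
  then show "\<exists>p0 p1 p2 p3 p4. ?path p0 p1 p2 p3 p4" by blast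
next
  assume "\<exists>p0 p1 p2 p3 p4. ?path p0 p1 p2 p3 p4"
  then obtain p0 p1 p2 p3 p4 where p: "?path p0 p1 p2 p3 p4" by blast
  define f where "f i = [p0, p1, p2, p3, p4] ! i" for i
  have below5: "i < 5 \<Longrightarrow> i \<in> {0, 1, 2, 3, 4}" for i :: nat by auto
  have f_simps: "f 0 = p0" "f (Suc 0) = p1" "f 2 = p2" "f 3 = p3" "f 4 = p4"
    by (simp_all add: f_def numeral_eq_Suc)
  have sym: "E p1 p0" "E p2 p1" "E p3 p2" "E p4 p3" "\<not> E p2 p0" "\<not> E p3 p0" "\<not> E p4 p0"
    "\<not> E p3 p1" "\<not> E p4 p1" "\<not> E p4 p2"
    using p graph_sym[OF g] by blast+
  have loops: "\<not> E p p" for p using graph_irrefl[OF g] .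
  have distinct: "p0 \<noteq> p1" "p0 \<noteq> p2" "p0 \<noteq> p3" "p0 \<noteq> p4" "p1 \<noteq> p2" "p1 \<noteq> p3"
    "p1 \<noteq> p4" "p2 \<noteq> p3" "p2 \<noteq> p4" "p3 \<noteq> p4"
    using p sym loops by metis+
  have edges: "E (f i) (f j) \<longleftrightarrow> (i = Suc j \<or> j = Suc i)" if "i < 5" "j < 5" for i j
    using below5[OF that(1)] below5[OF that(2)]
    by (elim insertE emptyE) (simp_all add: f_simps p sym loops)
  have "inj_on f {0..<5}"
  proof (rule inj_onI)
    fix i j assume "i \<in> {0..<5}" "j \<in> {0..<5}" "f i = f j"
    then show "i = j"
      using below5[of i] below5[of j] distinct distinct[symmetric]
      by (auto simp: f_simps)
  qed
  moreover have "f ` {0..<5} \<subseteq> V"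
    using p graph_vertices[OF g] below5 by (fastforce simp: f_simps)
  ultimately show "contains_induced_P5 V E"
    unfolding contains_induced_P5_def using edges by blast
qed

lemma induced_P5_from_walk:
  assumes g: "graph V E" and triangle_free: "\<And>u v w. E u v \<Longrightarrow> E v w \<Longrightarrow> \<not> E u w"
    and walk: "E\<^sup>*\<^sup>* a c"
    and "E a b" "E c d" "\<not> E a c" "\<not> E a d" "\<not> E b c" "\<not> E b d"
  shows "contains_induced_P5 V E"
  using walk assms(4-)
proof (induction arbitrary: b rule: converse_rtranclp_induct)
  case base
  then show ?case using graph_sym[OF g] by blast
next
  case (step a v)
  txt \<open>The next vertex v of the walk either closes one of the induced paths b a v c d and
    b a v d c, or reproduces the configuration with (v, a) in place of (a, b).\<close>
  have "E b a" "\<not> E b v" using step.prems(1) \<open>E a v\<close> graph_sym[OF g] triangle_free by blast+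
  consider "E v c" | "\<not> E v c" "E v d" | "\<not> E v c" "\<not> E v d" by blast
  then show ?case
  proof cases
    case 1
    have "\<not> E v d" using 1 \<open>E c d\<close> triangle_free by blast
    then show ?thesis
      using 1 step \<open>E b a\<close> \<open>\<not> E b v\<close> unfolding contains_induced_P5_iff[OF g] by blast
  next
    case 2
    then show ?thesis
      using step \<open>E b a\<close> \<open>\<not> E b v\<close> graph_sym[OF g] unfolding contains_induced_P5_iff[OF g]
      by blast
  next
    case 3
    then show ?thesis using step graph_sym[OF g] by blast
  qed
qed

section \<open>Modules and prime graphs\<close>

lemma module_subset: "module W E M \<Longrightarrow> M \<subseteq> W"
  unfolding module_def by blast

lemma module_separator:
  assumes "module W E M" "u \<in> M" "u' \<in> M" "w \<in> W" "E w u" "\<not> E w u'"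
  shows "w \<in> M"
  using assms unfolding module_def by blast

lemma module_pair:
  assumes "u \<in> W" "v \<in> W" "\<And>w. w \<in> W - {u, v} \<Longrightarrow> E w u \<longleftrightarrow> E w v"
  shows "module W E {u, v}"
  using assms unfolding module_def by blast

lemma module_delete_isolated:
  assumes "\<And>w. w \<in> W \<Longrightarrow> \<not> E v w"
  shows "module W E (W - {v})"
  using assms unfolding module_def by blast

lemma module_nontrivial_not_prime:
  assumes "module W E M" "M \<noteq> {}" "\<And>z. M \<noteq> {z}" "M \<noteq> W"
  shows "\<not> prime_graph W E"
  using assms unfolding prime_graph_def trivial_module_def by blast

lemma prime_graph_module:
  assumes "prime_graph V E" "module V E M" "M \<noteq> {}" "\<And>z. M \<noteq> {z}"
  shows "M = V"
  using assms unfolding prime_graph_def trivial_module_def by blast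

lemma prime_graph_not_pair:
  assumes "prime_graph V E"
  shows "V \<noteq> {u, v}"
proof
  assume "V = {u, v}"
  then have "finite V" "card V \<le> 2" by (auto simp: card_insert_if)
  then show False using assms unfolding prime_graph_def by auto
qed

definition nbhd :: "('a \<Rightarrow> 'a \<Rightarrow> bool) \<Rightarrow> 'a \<Rightarrow> 'a set" where
  "nbhd E u = {w. E u w}"

lemma prime_graph_nbhd_inj:
  assumes g: "graph V E" and prime: "prime_graph V E"
    and "u \<in> V" "v \<in> V" "nbhd E u = nbhd E v"
  shows "u = v"
proof (rule ccontr)
  assume "u \<noteq> v"
  have "module V E {u, v}"
    using assms(3-5) graph_sym[OF g] by (intro module_pair) (auto simp: nbhd_def)
  moreover have "{u, v} \<noteq> {z}" for z using \<open>u \<noteq> v\<close> by auto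
  ultimately have "{u, v} = V" using prime_graph_module[OF prime] by blast
  then show False using prime_graph_not_pair[OF prime] by metis
qed

lemma prime_graph_has_neighbour:
  assumes prime: "prime_graph V E" and "u \<in> V"
  shows "\<exists>w. E u w"
proof (rule ccontr)
  assume "\<nexists>w. E u w"
  then have "module V E (V - {u})" by (intro module_delete_isolated) blast
  moreover have "V - {u} \<noteq> {}" using prime_graph_not_pair[OF prime, of u u] assms(2) by blast
  moreover have "V - {u} \<noteq> {z}" for z using prime_graph_not_pair[OF prime, of u z] assms(2) by blast
  ultimately have "V - {u} = V" using prime_graph_module[OF prime] by blast
  then show False using assms(2) by blast
qed

lemma prime_graph_connected:
  assumes g: "graph V E" and prime: "prime_graph V E" and "u \<in> V" "v \<in> V"
  shows "E\<^sup>*\<^sup>* u v"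
proof -
  define C where "C = {w. E\<^sup>*\<^sup>* u w}"
  have "C \<subseteq> V"
  proof
    fix w assume "w \<in> C"
    then have "E\<^sup>*\<^sup>* u w" unfolding C_def by simp
    then show "w \<in> V"
      by (induction rule: rtranclp_induct) (use assms(3) graph_vertices[OF g] in blast)+
  qed
  moreover have "\<not> E w m" if "w \<in> V - C" "m \<in> C" for w m
  proof
    assume "E w m"
    then have "E m w" by (rule graph_sym[OF g])
    then have "w \<in> C" using that(2) unfolding C_def by (simp add: rtranclp.rtrancl_into_rtrancl)
    then show False using that(1) by blast
  qed
  ultimately have "module V E C" unfolding module_def by blast
  moreover obtain w where "E u w" using prime_graph_has_neighbour[OF prime assms(3)] by blast
  then have "u \<in> C" "w \<in> C" "u \<noteq> w" using graph_irrefl[OF g] unfolding C_def by auto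
  ultimately have "C = V" using prime_graph_module[OF prime] by blast
  then show ?thesis using assms(4) unfolding C_def by blast
qed

lemma deleted_vertex_splits_module:
  assumes prime: "prime_graph V E" and "v \<in> V"
    and M: "module (V - {v}) E M" "M \<noteq> {}" "\<And>z. M \<noteq> {z}"
  shows "\<exists>m1\<in>M. \<exists>m2\<in>M. E v m1 \<and> \<not> E v m2"
proof (rule ccontr)
  assume "\<not> ?thesis"
  then have "module V E M" using M(1) \<open>v \<in> V\<close> unfolding module_def by blast
  then have "M = V" using prime_graph_module[OF prime] M by blast
  then show False using module_subset[OF M(1)] \<open>v \<in> V\<close> by blast
qed

lemma critical_delete_nontrivial_module:
  assumes "critical V E" "infinite V \<or> 4 \<le> card V" "v \<in> V"
  obtains M where "module (V - {v}) E M" "M \<noteq> {}" "\<And>z. M \<noteq> {z}" "M \<noteq> V - {v}"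
proof -
  have "infinite (V - {v}) \<or> 3 \<le> card (V - {v})"
    using assms(2,3) by (cases "finite V") auto
  moreover have "\<not> prime_graph (V - {v}) E" using assms(1,3) unfolding critical_def by blast
  ultimately show ?thesis using that unfolding prime_graph_def trivial_module_def by blast
qed

lemma diff_two_not_subset_singleton:
  assumes "infinite V \<or> 4 \<le> card V"
  shows "\<not> V - {a, b} \<subseteq> {z}"
proof
  assume "V - {a, b} \<subseteq> {z}"
  then have "V \<subseteq> {a, b, z}" by blast
  moreover have "card {a, b, z} \<le> 3" by (simp add: card_insert_le_m1)
  ultimately show False
    using assms finite_subset card_mono[of "{a, b, z}" V] by fastforce
qed

section \<open>Half graphs\<close>

definition immediate_predecessor :: "'a set \<Rightarrow> 'a rel \<Rightarrow> 'a \<Rightarrow> 'a \<Rightarrow> bool" where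
  "immediate_predecessor X r p x \<longleftrightarrow>
     (p, x) \<in> r \<and> p \<noteq> x \<and> \<not> (\<exists>z\<in>X. (p, z) \<in> r \<and> (z, x) \<in> r \<and> z \<noteq> p \<and> z \<noteq> x)"

lemma discrete_order_iff_immediate_predecessor:
  "discrete_order X r \<longleftrightarrow>
     (\<forall>x\<in>X. (\<exists>y\<in>X. (y, x) \<in> r \<and> y \<noteq> x) \<longrightarrow> (\<exists>p\<in>X. immediate_predecessor X r p x)) \<and>
     (\<forall>x\<in>X. (\<exists>y\<in>X. (x, y) \<in> r \<and> y \<noteq> x) \<longrightarrow> (\<exists>s\<in>X. immediate_predecessor X r x s))"
  unfolding discrete_order_def immediate_predecessor_def by blast

locale half_graph =
  fixes V :: "'a set" and E :: "'a \<Rightarrow> 'a \<Rightarrow> bool" and X Y :: "'a set"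
    and r :: "'a rel" and \<phi> :: "'a \<Rightarrow> 'a"
  assumes graph: "graph V E" and half_graph_wrt: "half_graph_wrt V E X Y r \<phi>"
begin

lemma disjoint: "X \<inter> Y = {}"
  and vertices: "X \<union> Y = V"
  and order_subset: "r \<subseteq> X \<times> X"
  and linear_order: "linear_order_on X r"
  and bij: "bij_betw \<phi> X Y"
  and edge_iff: "E u v \<longleftrightarrow> (\<exists>x\<in>X. \<exists>x'\<in>X. (x, x') \<in> r \<and>
                            ((u = x \<and> v = \<phi> x') \<or> (v = x \<and> u = \<phi> x')))"
  using half_graph_wrt unfolding half_graph_wrt_def by auto

lemma Y_eq: "Y = \<phi> ` X"
  using bij by (simp add: bij_betw_def)

lemma phi_eq_iff: "x \<in> X \<Longrightarrow> c \<in> X \<Longrightarrow> \<phi> x = \<phi> c \<longleftrightarrow> x = c"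
  using bij by (auto simp: bij_betw_def inj_on_def)

lemma phi_notin_X: "x \<in> X \<Longrightarrow> \<phi> x \<notin> X"
  using Y_eq disjoint by blast

lemma X_subset: "X \<subseteq> V" and phi_in_V: "x \<in> X \<Longrightarrow> \<phi> x \<in> V"
  using vertices Y_eq by auto

lemma phi_in_delete_X: "c \<in> X \<Longrightarrow> x \<in> X \<Longrightarrow> \<phi> c \<in> V - {x}"
  using phi_in_V phi_notin_X by (metis DiffI singletonD)

lemma vertex_cases:
  assumes "u \<in> V"
  obtains "u \<in> X" | c where "c \<in> X" "u = \<phi> c"
  using assms vertices Y_eq by blast

lemma r_refl: "x \<in> X \<Longrightarrow> (x, x) \<in> r"
  using linear_order unfolding linear_order_on_def partial_order_on_def preorder_on_def
  by (blast dest: refl_onD)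

lemma r_trans: "(x, y) \<in> r \<Longrightarrow> (y, z) \<in> r \<Longrightarrow> (x, z) \<in> r"
  using linear_order unfolding linear_order_on_def partial_order_on_def preorder_on_def
  by (meson transD)

lemma r_antisym: "(x, y) \<in> r \<Longrightarrow> (y, x) \<in> r \<Longrightarrow> x = y"
  using linear_order unfolding linear_order_on_def partial_order_on_def
  by (meson antisymD)

lemma r_total: "x \<in> X \<Longrightarrow> y \<in> X \<Longrightarrow> (x, y) \<in> r \<or> (y, x) \<in> r"
  using linear_order r_refl unfolding linear_order_on_def total_on_def by metis

lemma edge_X_phi: "x \<in> X \<Longrightarrow> c \<in> X \<Longrightarrow> E x (\<phi> c) \<longleftrightarrow> (x, c) \<in> r"
  unfolding edge_iff using phi_eq_iff phi_notin_X by blast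

lemma edge_phi_X: "x \<in> X \<Longrightarrow> c \<in> X \<Longrightarrow> E (\<phi> c) x \<longleftrightarrow> (x, c) \<in> r"
  using edge_X_phi graph_sym[OF graph] by blast

lemma no_edge_X: "x \<in> X \<Longrightarrow> x' \<in> X \<Longrightarrow> \<not> E x x'"
  unfolding edge_iff using phi_notin_X by blast

lemma no_edge_phi: "a \<in> X \<Longrightarrow> b \<in> X \<Longrightarrow> \<not> E (\<phi> a) (\<phi> b)"
  unfolding edge_iff using phi_notin_X by blast

lemma neighbour_of_X:
  assumes "x \<in> X" "E x v"
  obtains c where "c \<in> X" "v = \<phi> c"
  using assms edge_iff phi_notin_X by metis

lemma neighbour_of_phi: "c \<in> X \<Longrightarrow> E (\<phi> c) v \<Longrightarrow> v \<in> X"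
  using edge_iff phi_notin_X phi_eq_iff by metis

lemma nbhd_antimono_X:
  assumes "(x, x') \<in> r"
  shows "nbhd E x' \<subseteq> nbhd E x"
proof
  fix v assume "v \<in> nbhd E x'"
  moreover have "x \<in> X" "x' \<in> X" using assms order_subset by auto
  ultimately obtain c where "c \<in> X" "v = \<phi> c" "(x', c) \<in> r"
    using neighbour_of_X edge_X_phi unfolding nbhd_def by (metis mem_Collect_eq)
  then show "v \<in> nbhd E x"
    using assms r_trans edge_X_phi \<open>x \<in> X\<close> unfolding nbhd_def by blast
qed

lemma nbhd_mono_phi: "(a, b) \<in> r \<Longrightarrow> nbhd E (\<phi> a) \<subseteq> nbhd E (\<phi> b)"
  using order_subset r_trans edge_phi_X neighbour_of_phi unfolding nbhd_def by blast

lemma common_neighbour_nbhd_comparable: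
  assumes "E u v" "E w v"
  shows "nbhd E u \<subseteq> nbhd E w \<or> nbhd E w \<subseteq> nbhd E u"
proof -
  have "v \<in> V" using graph_vertices[OF graph assms(1)] by blast
  then show ?thesis
  proof (cases rule: vertex_cases)
    case 1
    obtain a b where "a \<in> X" "u = \<phi> a" "b \<in> X" "w = \<phi> b"
      using neighbour_of_X[OF 1] assms graph_sym[OF graph] by metis
    then show ?thesis using r_total nbhd_mono_phi by blast
  next
    case (2 c)
    then have "u \<in> X" "w \<in> X" using neighbour_of_phi assms graph_sym[OF graph] by blast+
    then show ?thesis using r_total nbhd_antimono_X by blast
  qed
qed

lemma no_induced_P5: "\<not> contains_induced_P5 V E"
proof
  assume "contains_induced_P5 V E"
  then obtain p0 p1 p2 p3 p4 where p: "E p0 p1" "E p1 p2" "E p2 p3" "E p3 p4" "\<not> E p0 p3" "\<not> E p1 p4"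
    unfolding contains_induced_P5_iff[OF graph] by blast
  have "p0 \<in> nbhd E p1 - nbhd E p3" "p4 \<in> nbhd E p3 - nbhd E p1"
    using p graph_sym[OF graph] unfolding nbhd_def by blast+
  moreover have "E p3 p2" using p(3) graph_sym[OF graph] by blast
  ultimately show False using common_neighbour_nbhd_comparable[OF p(2)] by blast
qed

lemma module_absorbs_matched_pair:
  assumes M: "module W E M" and a: "a \<in> X" "a \<in> M" "\<phi> a \<in> M"
    and c: "c \<in> X" "c \<in> W" "\<phi> c \<in> W"
  shows "c \<in> M \<and> \<phi> c \<in> M"
proof (cases "(a, c) \<in> r")
  case True
  then have "\<phi> c \<in> M"
    using module_separator[OF M a(2,3) c(3)] edge_phi_X no_edge_phi a(1) c(1) by blast
  moreover from this have "c \<in> M"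
    using module_separator[OF M _ a(2) c(2)] edge_X_phi r_refl no_edge_X a(1) c(1) by blast
  ultimately show ?thesis by blast
next
  case False
  then have "(c, a) \<in> r" using r_total a(1) c(1) by blast
  then have "c \<in> M"
    using module_separator[OF M a(3,2) c(2)] edge_X_phi no_edge_X a(1) c(1) by blast
  moreover from this have "\<phi> c \<in> M"
    using module_separator[OF M _ a(3) c(3)] edge_phi_X r_refl no_edge_phi a(1) c(1) by blast
  ultimately show ?thesis by blast
qed

lemma module_contains_matched_pair:
  assumes M: "module V E M" and u: "u \<in> M" "u' \<in> M" "u \<noteq> u'"
  shows "\<exists>a\<in>X. a \<in> M \<and> \<phi> a \<in> M"
proof -
  have in_V: "m \<in> V" if "m \<in> M" for m using that module_subset[OF M] by blast
  have X_pair: "\<phi> x \<in> M"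
    if "x \<in> X" "x' \<in> X" "x \<in> M" "x' \<in> M" "(x, x') \<in> r" "x \<noteq> x'" for x x'
  proof (rule module_separator[OF M that(3,4) phi_in_V[OF that(1)]])
    show "E (\<phi> x) x" using edge_phi_X r_refl that(1) by blast
    show "\<not> E (\<phi> x) x'" using edge_phi_X r_antisym that by blast
  qed
  have Y_pair: "c \<in> M"
    if "b \<in> X" "c \<in> X" "\<phi> b \<in> M" "\<phi> c \<in> M" "(b, c) \<in> r" "b \<noteq> c" for b c
  proof (rule module_separator[OF M that(4,3)])
    show "c \<in> V" using X_subset that(2) by blast
    show "E c (\<phi> c)" using edge_X_phi r_refl that(2) by blast
    show "\<not> E c (\<phi> b)" using edge_X_phi r_antisym that by blast
  qed
  have "\<exists>a\<in>X. a \<in> M"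
  proof (rule ccontr)
    assume none: "\<not> (\<exists>a\<in>X. a \<in> M)"
    obtain b where b: "b \<in> X" "u = \<phi> b" using vertex_cases[OF in_V[OF u(1)]] none u(1) by blast
    obtain c where c: "c \<in> X" "u' = \<phi> c" using vertex_cases[OF in_V[OF u(2)]] none u(2) by blast
    have "b \<noteq> c" using b c u(3) by blast
    then show False
      using r_total[OF b(1) c(1)] Y_pair[OF b(1) c(1)] Y_pair[OF c(1) b(1)] b c u none by blast
  qed
  then obtain a where a: "a \<in> X" "a \<in> M" by blast
  show ?thesis
  proof (cases "\<exists>b\<in>X. \<phi> b \<in> M")
    case True
    then obtain b where "b \<in> X" "\<phi> b \<in> M" by blast
    have "\<phi> a \<in> M"
    proof (rule module_separator[OF M a(2) \<open>\<phi> b \<in> M\<close> phi_in_V[OF a(1)]])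
      show "E (\<phi> a) a" using edge_phi_X r_refl a(1) by blast
      show "\<not> E (\<phi> a) (\<phi> b)" using no_edge_phi a(1) \<open>b \<in> X\<close> by blast
    qed
    then show ?thesis using a by blast
  next
    case False
    have "u \<in> X" using vertex_cases[OF in_V[OF u(1)]] False u(1) by blast
    moreover have "u' \<in> X" using vertex_cases[OF in_V[OF u(2)]] False u(2) by blast
    ultimately show ?thesis
      using r_total X_pair[of u u'] X_pair[of u' u] u by blast
  qed
qed

lemma prime:
  assumes "infinite V \<or> 3 \<le> card V"
  shows "prime_graph V E"
  unfolding prime_graph_def trivial_module_def
proof (intro conjI allI impI assms)
  fix M assume M: "module V E M"
  show "M = {} \<or> M = V \<or> (\<exists>x. M = {x})"
  proof (rule ccontr)
    assume "\<not> ?thesis"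
    then obtain u u' where "u \<in> M" "u' \<in> M" "u \<noteq> u'" "M \<noteq> V" by blast
    then obtain a where "a \<in> X" "a \<in> M" "\<phi> a \<in> M"
      using module_contains_matched_pair[OF M] by blast
    then have "V \<subseteq> M"
      using module_absorbs_matched_pair[OF M] X_subset phi_in_V vertex_cases by (metis subsetI subsetD)
    then show False using module_subset[OF M] \<open>M \<noteq> V\<close> by blast
  qed
qed

lemma below_immediate_predecessor_iff:
  assumes "immediate_predecessor X r p x" "w \<in> X" "w \<noteq> x"
  shows "(w, p) \<in> r \<longleftrightarrow> (w, x) \<in> r"
proof
  assume "(w, x) \<in> r"
  show "(w, p) \<in> r"
  proof (rule ccontr)
    assume "(w, p) \<notin> r"
    moreover have "p \<in> X" using assms(1) order_subset unfolding immediate_predecessor_def by blast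
    ultimately have "(p, w) \<in> r" "w \<noteq> p" using r_total r_refl assms(2) by blast+
    then show False using assms \<open>(w, x) \<in> r\<close> unfolding immediate_predecessor_def by blast
  qed
qed (use assms(1) r_trans in \<open>unfold immediate_predecessor_def, blast\<close>)

lemma not_prime_delete_if_immediate_predecessor:
  assumes x: "x \<in> X" and p: "p \<in> X" "immediate_predecessor X r p x"
  shows "\<not> prime_graph (V - {x}) E"
proof -
  have "p \<noteq> x" using p(2) unfolding immediate_predecessor_def by blast
  have "E w (\<phi> p) \<longleftrightarrow> E w (\<phi> x)" if w: "w \<in> V - {x} - {\<phi> p, \<phi> x}" for w
  proof -
    have "w \<in> V" using w by blast
    then show ?thesis
    proof (cases rule: vertex_cases)
      case 1
      then show ?thesis
        using below_immediate_predecessor_iff[OF p(2) 1] edge_X_phi[OF 1] p(1) x w by blast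
    next
      case (2 c)
      then show ?thesis using no_edge_phi p(1) x by blast
    qed
  qed
  then have "module (V - {x}) E {\<phi> p, \<phi> x}"
    using phi_in_delete_X[OF p(1) x] phi_in_delete_X[OF x x] by (intro module_pair)
  moreover have "{\<phi> p, \<phi> x} \<noteq> {z}" for z using phi_eq_iff[OF p(1) x] \<open>p \<noteq> x\<close> by auto
  moreover have "p \<in> V - {x}" "p \<notin> {\<phi> p, \<phi> x}"
    using X_subset p(1) \<open>p \<noteq> x\<close> phi_notin_X[OF p(1)] phi_notin_X[OF x] by auto
  then have "{\<phi> p, \<phi> x} \<noteq> V - {x}" by blast
  ultimately show ?thesis using module_nontrivial_not_prime by blast
qed

lemma not_prime_delete_if_minimal:
  assumes x: "x \<in> X" and minimal: "\<not> (\<exists>l\<in>X. (l, x) \<in> r \<and> l \<noteq> x)"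
    and size: "infinite V \<or> 4 \<le> card V"
  shows "\<not> prime_graph (V - {x}) E"
proof -
  have "\<not> E (\<phi> x) w" if "w \<in> V - {x}" for w
  proof
    assume "E (\<phi> x) w"
    then have "w \<in> X" "(w, x) \<in> r" using neighbour_of_phi edge_phi_X x by blast+
    then show False using minimal that by blast
  qed
  then have "module (V - {x}) E (V - {x} - {\<phi> x})" by (rule module_delete_isolated)
  moreover have "V - {x} - {\<phi> x} \<noteq> {z}" for z
    using diff_two_not_subset_singleton[OF size, of x "\<phi> x" z] by blast
  moreover have "V - {x} - {\<phi> x} \<noteq> {}"
    using diff_two_not_subset_singleton[OF size, of x "\<phi> x" x] by blast
  moreover have "V - {x} - {\<phi> x} \<noteq> V - {x}" using phi_in_delete_X[OF x x] by blast
  ultimately show ?thesis using module_nontrivial_not_prime by metis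
qed

lemma split_module_of_delete_meets_X:
  assumes x0: "x0 \<in> X" and no_pred: "\<not> (\<exists>p\<in>X. immediate_predecessor X r p x0)"
    and M: "module (V - {x0}) E M" and m: "m1 \<in> M" "m2 \<in> M" "E x0 m1" "\<not> E x0 m2"
  shows "\<exists>a\<in>X. a \<in> M"
proof (cases "m2 \<in> X")
  case False
  obtain c where c: "c \<in> X" "m1 = \<phi> c" "(x0, c) \<in> r"
    using neighbour_of_X[OF x0 m(3)] edge_X_phi x0 m(3) by metis
  obtain b where b: "b \<in> X" "m2 = \<phi> b"
    using vertex_cases module_subset[OF M] m(2) False by blast
  then have "(x0, b) \<notin> r" using m(4) edge_X_phi x0 by blast
  obtain z where z: "z \<in> X" "z \<noteq> x0" "(z, c) \<in> r" "(z, b) \<notin> r"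
  proof (cases "c = x0")
    case True
    have "(b, x0) \<in> r" "b \<noteq> x0"
      using \<open>(x0, b) \<notin> r\<close> r_total r_refl b(1) x0 by blast+
    then obtain z where "z \<in> X" "(b, z) \<in> r" "(z, x0) \<in> r" "z \<noteq> b" "z \<noteq> x0"
      using no_pred b(1) unfolding immediate_predecessor_def by blast
    then show ?thesis using that True r_antisym by blast
  next
    case False
    then show ?thesis using that c r_refl r_trans \<open>(x0, b) \<notin> r\<close> by blast
  qed
  have "z \<in> M"
  proof (rule module_separator[OF M m(1,2)])
    show "z \<in> V - {x0}" using z X_subset by blast
    show "E z m1" "\<not> E z m2" using z c b edge_X_phi by blast+
  qed
  then show ?thesis using z by blast
qed (use m in blast)

lemma prime_delete_if_no_immediate_predecessor:
  assumes x0: "x0 \<in> X" and size: "infinite V \<or> 4 \<le> card V"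
    and below: "\<exists>l\<in>X. (l, x0) \<in> r \<and> l \<noteq> x0"
    and no_pred: "\<not> (\<exists>p\<in>X. immediate_predecessor X r p x0)"
  shows "prime_graph (V - {x0}) E"
  unfolding prime_graph_def trivial_module_def
proof (intro conjI allI impI)
  show "infinite (V - {x0}) \<or> 3 \<le> card (V - {x0})"
    using size x0 X_subset by (cases "finite V") auto
  fix M assume M: "module (V - {x0}) E M"
  show "M = {} \<or> M = V - {x0} \<or> (\<exists>z. M = {z})"
  proof (rule ccontr)
    assume "\<not> ?thesis"
    then have nontrivial: "M \<noteq> {}" "\<And>z. M \<noteq> {z}" "M \<noteq> V - {x0}" by auto
    have "x0 \<in> V" using x0 X_subset by blast
    have "prime_graph V E" using prime size by auto
    then obtain m1 m2 where m: "m1 \<in> M" "m2 \<in> M" "E x0 m1" "\<not> E x0 m2"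
      using deleted_vertex_splits_module[OF _ \<open>x0 \<in> V\<close> M nontrivial(1,2)] by blast
    then obtain a where a: "a \<in> X" "a \<in> M"
      using split_module_of_delete_meets_X[OF x0 no_pred M] by blast
    obtain c where c: "c \<in> X" "m1 = \<phi> c" using neighbour_of_X[OF x0 m(3)] .
    have "\<phi> a \<in> M"
    proof (rule module_separator[OF M a(2) m(1) phi_in_delete_X[OF a(1) x0]])
      show "E (\<phi> a) a" "\<not> E (\<phi> a) m1" using edge_phi_X r_refl no_edge_phi a(1) c by blast+
    qed
    have absorbed: "c \<in> M \<and> \<phi> c \<in> M" if "c \<in> X" "c \<noteq> x0" for c
      using module_absorbs_matched_pair[OF M a \<open>\<phi> a \<in> M\<close> that(1)] that X_subset
        phi_in_delete_X[OF that(1) x0] by blast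
    obtain l where l: "l \<in> X" "(l, x0) \<in> r" "l \<noteq> x0" using below by blast
    have "\<phi> x0 \<in> M"
    proof (rule module_separator[OF M _ \<open>\<phi> a \<in> M\<close> phi_in_delete_X[OF x0 x0]])
      show "l \<in> M" using absorbed l by blast
      show "E (\<phi> x0) l" "\<not> E (\<phi> x0) (\<phi> a)" using edge_phi_X no_edge_phi l a(1) x0 by blast+
    qed
    then have "V - {x0} \<subseteq> M" using absorbed vertex_cases by blast
    then show False using nontrivial(3) module_subset[OF M] by blast
  qed
qed

lemma prime_graph_delete_iff:
  assumes "x \<in> X" "infinite V \<or> 4 \<le> card V"
  shows "prime_graph (V - {x}) E \<longleftrightarrow>
    (\<exists>l\<in>X. (l, x) \<in> r \<and> l \<noteq> x) \<and> \<not> (\<exists>p\<in>X. immediate_predecessor X r p x)"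
  using assms prime_delete_if_no_immediate_predecessor not_prime_delete_if_minimal
    not_prime_delete_if_immediate_predecessor by blast

text \<open>Exchanging the sides reverses the order: x is adjacent to \<phi> x' iff x \<le> x', that is,
  iff \<phi> x' is below \<phi> x in the dual order.\<close>

definition dual_order :: "'a rel" where
  "dual_order = {(\<phi> a, \<phi> b) | a b. (b, a) \<in> r}"

lemma dual_order_phi: "a \<in> X \<Longrightarrow> b \<in> X \<Longrightarrow> (\<phi> a, \<phi> b) \<in> dual_order \<longleftrightarrow> (b, a) \<in> r"
  unfolding dual_order_def using phi_eq_iff order_subset by blast

lemma dual_order_subset: "dual_order \<subseteq> Y \<times> Y"
  unfolding dual_order_def Y_eq using order_subset by blast

lemma linear_order_dual_order: "linear_order_on Y dual_order"
  unfolding linear_order_on_def partial_order_on_def preorder_on_def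
proof (intro conjI)
  show "dual_order \<subseteq> Y \<times> Y" by (fact dual_order_subset)
  show "refl_on Y dual_order"
    unfolding refl_on_def Y_eq using dual_order_subset dual_order_phi r_refl Y_eq by blast
  show "trans dual_order"
    unfolding trans_def dual_order_def using phi_eq_iff order_subset r_trans by blast
  show "antisym dual_order"
    unfolding antisym_def dual_order_def using phi_eq_iff order_subset r_antisym by blast
  show "total_on Y dual_order"
    unfolding total_on_def Y_eq using dual_order_phi r_total by blast
qed

lemma dual_half_graph: "half_graph V E Y X dual_order (inv_into X \<phi>)"
  unfolding half_graph_def half_graph_wrt_def
proof (intro conjI allI graph)
  show "Y \<inter> X = {}" "Y \<union> X = V" using disjoint vertices by blast+
  show "dual_order \<subseteq> Y \<times> Y" "linear_order_on Y dual_order"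
    by (fact dual_order_subset, fact linear_order_dual_order)
  show "bij_betw (inv_into X \<phi>) Y X" using bij by (rule bij_betw_inv_into)
  have inv: "inv_into X \<phi> (\<phi> a) = a" if "a \<in> X" for a
    using bij that by (simp add: bij_betw_def)
  fix u v
  show "E u v \<longleftrightarrow> (\<exists>y\<in>Y. \<exists>y'\<in>Y. (y, y') \<in> dual_order \<and>
                  ((u = y \<and> v = inv_into X \<phi> y') \<or> (v = y \<and> u = inv_into X \<phi> y')))"
    unfolding edge_iff[of u v] Y_eq using dual_order_phi inv by auto
qed

lemma immediate_predecessor_dual_order:
  assumes "a \<in> X" "b \<in> X"
  shows "immediate_predecessor Y dual_order (\<phi> a) (\<phi> b) \<longleftrightarrow> immediate_predecessor X r b a"
  unfolding immediate_predecessor_def Y_eq using assms dual_order_phi phi_eq_iff by auto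

lemma prime_graph_delete_phi_iff:
  assumes x: "x \<in> X" and size: "infinite V \<or> 4 \<le> card V"
  shows "prime_graph (V - {\<phi> x}) E \<longleftrightarrow>
    (\<exists>s\<in>X. (x, s) \<in> r \<and> s \<noteq> x) \<and> \<not> (\<exists>s\<in>X. immediate_predecessor X r x s)"
proof -
  interpret dual: half_graph V E Y X dual_order "inv_into X \<phi>" by (rule dual_half_graph)
  have "\<phi> x \<in> Y" using x Y_eq by blast
  then have "prime_graph (V - {\<phi> x}) E \<longleftrightarrow>
      (\<exists>l\<in>Y. (l, \<phi> x) \<in> dual_order \<and> l \<noteq> \<phi> x) \<and>
      \<not> (\<exists>p\<in>Y. immediate_predecessor Y dual_order p (\<phi> x))"
    using dual.prime_graph_delete_iff size by blast
  moreover have "(\<exists>l\<in>Y. (l, \<phi> x) \<in> dual_order \<and> l \<noteq> \<phi> x) \<longleftrightarrow> (\<exists>s\<in>X. (x, s) \<in> r \<and> s \<noteq> x)"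
    unfolding Y_eq using x dual_order_phi phi_eq_iff by auto
  moreover have "(\<exists>p\<in>Y. immediate_predecessor Y dual_order p (\<phi> x)) \<longleftrightarrow>
      (\<exists>s\<in>X. immediate_predecessor X r x s)"
    using Y_eq x immediate_predecessor_dual_order by auto
  ultimately show ?thesis by blast
qed

lemma critical_iff_discrete_order:
  assumes size: "infinite V \<or> 4 \<le> card V"
  shows "critical V E \<longleftrightarrow> discrete_order X r"
proof -
  have "critical V E \<longleftrightarrow> (\<forall>v\<in>V. \<not> prime_graph (V - {v}) E)"
    unfolding critical_def using prime size by auto
  also have "\<dots> \<longleftrightarrow> (\<forall>x\<in>X. \<not> prime_graph (V - {x}) E \<and> \<not> prime_graph (V - {\<phi> x}) E)"
    using vertices Y_eq by auto
  also have "\<dots> \<longleftrightarrow> discrete_order X r"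
    unfolding discrete_order_iff_immediate_predecessor
    using prime_graph_delete_iff prime_graph_delete_phi_iff size by auto
  finally show ?thesis .
qed

end

section \<open>P5-free critical bipartite graphs\<close>

text \<open>A choice of private neighbours will be the bijection X \<rightarrow> Y of the half-graph structure.\<close>

definition private_neighbour :: "'a set \<Rightarrow> ('a \<Rightarrow> 'a \<Rightarrow> bool) \<Rightarrow> 'a \<Rightarrow> 'a \<Rightarrow> bool" where
  "private_neighbour X E x y \<longleftrightarrow> E x y \<and> (\<forall>x'\<in>X. nbhd E x' \<subset> nbhd E x \<longrightarrow> \<not> E x' y)"

locale bipartite_P5_free_critical =
  fixes V :: "'a set" and E :: "'a \<Rightarrow> 'a \<Rightarrow> bool" and X Y :: "'a set"
  assumes graph: "graph V E"
    and disjoint: "X \<inter> Y = {}" and vertices: "X \<union> Y = V"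
    and independent_X: "\<forall>u\<in>X. \<forall>v\<in>X. \<not> E u v" and independent_Y: "\<forall>u\<in>Y. \<forall>v\<in>Y. \<not> E u v"
    and size: "infinite V \<or> 4 \<le> card V"
    and P5_free: "\<not> contains_induced_P5 V E" and critical: "critical V E"
begin

lemma swap: "bipartite_P5_free_critical V E Y X"
  using graph disjoint vertices independent_X independent_Y size P5_free critical
  unfolding bipartite_P5_free_critical_def by blast

lemma prime: "prime_graph V E"
  using critical unfolding critical_def by blast

lemma neighbour_of_X: "x \<in> X \<Longrightarrow> E x v \<Longrightarrow> v \<in> Y"
  using graph_vertices[OF graph] independent_X vertices by blast

lemma neighbour_of_Y: "y \<in> Y \<Longrightarrow> E y v \<Longrightarrow> v \<in> X"
  using graph_vertices[OF graph] independent_Y vertices by blast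

lemma triangle_free: "E u v \<Longrightarrow> E v w \<Longrightarrow> \<not> E u w"
  using graph_vertices[OF graph] vertices neighbour_of_X neighbour_of_Y independent_X by blast

lemma nbhd_chain:
  assumes x: "x \<in> X" and x': "x' \<in> X"
  shows "nbhd E x \<subseteq> nbhd E x' \<or> nbhd E x' \<subseteq> nbhd E x"
proof (rule ccontr)
  assume "\<not> ?thesis"
  then obtain b d where bd: "E x b" "\<not> E x' b" "E x' d" "\<not> E x d"
    unfolding nbhd_def by blast
  have walk: "E\<^sup>*\<^sup>* x x'" using prime_graph_connected[OF graph prime] x x' vertices by blast
  have "\<not> E x x'" "\<not> E b x'" "\<not> E b d"
    using independent_X independent_Y neighbour_of_X x x' bd graph_sym[OF graph] by blast+
  then have "contains_induced_P5 V E"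
    using induced_P5_from_walk[OF graph _ walk bd(1,3)] bd(4) triangle_free by blast
  then show False using P5_free by blast
qed

lemma module_extends_to_shadowed_vertex:
  assumes x0: "x0 \<in> X"
    and shadowed: "\<And>y. E x0 y \<Longrightarrow> \<exists>x'\<in>X. nbhd E x' \<subset> nbhd E x0 \<and> E x' y"
    and M: "module (V - {x0}) E M" and x': "x' \<in> X" "x' \<in> M"
    and m1: "m1 \<in> Y" "m1 \<in> M" "E x' m1"
  shows "module V E (insert x0 M)"
  unfolding module_def
proof (intro conjI ballI)
  show "insert x0 M \<subseteq> V" using module_subset[OF M] x0 vertices by blast
  fix w assume w: "w \<in> V - insert x0 M"
  then have w': "w \<in> V - {x0}" "w \<notin> M" by auto
  have off_M: "\<forall>m\<in>M. \<not> E w m"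
  proof (cases "w \<in> X")
    case True
    then show ?thesis using module_separator[OF M _ x'(2) w'(1)] independent_X x'(1) w'(2) by blast
  next
    case False
    then have "w \<in> Y" using w vertices by blast
    then show ?thesis using module_separator[OF M _ m1(2) w'(1)] independent_Y m1(1) w'(2) by blast
  qed
  have "\<not> E w x0"
  proof
    assume "E w x0"
    then obtain x'' where x'': "x'' \<in> X" "nbhd E x'' \<subset> nbhd E x0" "E x'' w"
      using shadowed graph_sym[OF graph] by blast
    have "x'' \<in> V - {x0}" "x'' \<notin> M"
      using x'' off_M vertices graph_sym[OF graph] by blast+
    then have "\<not> E x'' m1"
      using module_separator[OF M m1(2) x'(2)] independent_X x''(1) x'(1) by blast
    then have "nbhd E x'' \<subseteq> nbhd E x'"
      using nbhd_chain[OF x''(1) x'(1)] m1(3) unfolding nbhd_def by blast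
    then have "E w x'" using x''(3) graph_sym[OF graph] unfolding nbhd_def by blast
    then show False using off_M x'(2) by blast
  qed
  then show "(\<forall>m\<in>insert x0 M. E w m) \<or> (\<forall>m\<in>insert x0 M. \<not> E w m)" using off_M by blast
qed

lemma private_neighbour_exists:
  assumes x0: "x0 \<in> X"
  shows "\<exists>y. private_neighbour X E x0 y"
proof (rule ccontr)
  assume "\<nexists>y. private_neighbour X E x0 y"
  then have shadowed: "\<And>y. E x0 y \<Longrightarrow> \<exists>x'\<in>X. nbhd E x' \<subset> nbhd E x0 \<and> E x' y"
    unfolding private_neighbour_def by blast
  have "x0 \<in> V" using x0 vertices by blast
  obtain M where M: "module (V - {x0}) E M" "M \<noteq> {}" "\<And>z. M \<noteq> {z}" "M \<noteq> V - {x0}"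
    using critical_delete_nontrivial_module[OF critical size \<open>x0 \<in> V\<close>] by blast
  obtain m1 m2 where m: "m1 \<in> M" "m2 \<in> M" "E x0 m1" "\<not> E x0 m2"
    using deleted_vertex_splits_module[OF prime \<open>x0 \<in> V\<close> M(1-3)] by blast
  obtain x' where x': "x' \<in> X" "nbhd E x' \<subset> nbhd E x0" "E x' m1"
    using shadowed[OF m(3)] by blast
  have "\<not> E x' m2" using x'(2) m(4) unfolding nbhd_def by blast
  then have "x' \<in> M"
    using module_separator[OF M(1) m(1,2)] x' vertices by blast
  have "m1 \<in> Y" using neighbour_of_X[OF x0 m(3)] .
  then have "module V E (insert x0 M)"
    using module_extends_to_shadowed_vertex[OF x0 shadowed M(1) x'(1) \<open>x' \<in> M\<close>] m(1) x'(3) by blast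
  moreover have "insert x0 M \<noteq> {z}" for z using M(2,3) by blast
  ultimately have "insert x0 M = V" using prime_graph_module[OF prime] by blast
  then show False using M(4) module_subset[OF M(1)] by blast
qed

definition phi :: "'a \<Rightarrow> 'a" where
  "phi x = (SOME y. private_neighbour X E x y)"

definition nbhd_order :: "'a rel" where
  "nbhd_order = {(x, x'). x \<in> X \<and> x' \<in> X \<and> nbhd E x' \<subseteq> nbhd E x}"

lemma private_neighbour_phi: "x \<in> X \<Longrightarrow> private_neighbour X E x (phi x)"
  unfolding phi_def using private_neighbour_exists by (rule someI_ex)

lemma phi_in_Y: "x \<in> X \<Longrightarrow> phi x \<in> Y"
  using private_neighbour_phi neighbour_of_X unfolding private_neighbour_def by blast

lemma edge_phi_iff:
  assumes x: "x \<in> X" and x': "x' \<in> X"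
  shows "E x' (phi x) \<longleftrightarrow> nbhd E x \<subseteq> nbhd E x'"
proof
  assume "E x' (phi x)"
  then show "nbhd E x \<subseteq> nbhd E x'"
    using private_neighbour_phi[OF x] nbhd_chain[OF x x'] x' unfolding private_neighbour_def by blast
next
  assume "nbhd E x \<subseteq> nbhd E x'"
  then show "E x' (phi x)"
    using private_neighbour_phi[OF x] graph_sym[OF graph] unfolding private_neighbour_def nbhd_def by blast
qed

lemma nbhd_phi: "x \<in> X \<Longrightarrow> nbhd E (phi x) = {x'\<in>X. nbhd E x \<subseteq> nbhd E x'}"
  using edge_phi_iff neighbour_of_Y[OF phi_in_Y] graph_sym[OF graph] unfolding nbhd_def by blast

lemma phi_inj:
  assumes "x \<in> X" "c \<in> X" "phi x = phi c"
  shows "x = c"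
proof -
  have "E x (phi x)" "E c (phi c)"
    using private_neighbour_phi assms(1,2) unfolding private_neighbour_def by blast+
  then have "nbhd E x \<subseteq> nbhd E c" "nbhd E c \<subseteq> nbhd E x"
    using edge_phi_iff[OF assms(1,2)] edge_phi_iff[OF assms(2,1)] assms(3) by simp_all
  moreover have "x \<in> V" "c \<in> V" using assms(1,2) vertices by blast+
  ultimately show ?thesis using prime_graph_nbhd_inj[OF graph prime] by blast
qed

lemma phi_surj:
  assumes y: "y \<in> Y"
  shows "\<exists>x\<in>X. y = phi x"
proof -
  obtain x where x: "private_neighbour Y E y x"
    using bipartite_P5_free_critical.private_neighbour_exists[OF swap y] by blast
  then have "x \<in> X" using neighbour_of_Y y unfolding private_neighbour_def by blast
  have "E y x' \<longleftrightarrow> nbhd E x \<subseteq> nbhd E x'" if x': "x' \<in> X" for x'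
  proof
    assume "E y x'"
    show "nbhd E x \<subseteq> nbhd E x'"
    proof
      fix y' assume "y' \<in> nbhd E x"
      then have "y' \<in> Y" "E y' x" using neighbour_of_X \<open>x \<in> X\<close> graph_sym[OF graph]
        unfolding nbhd_def by blast+
      then have "\<not> nbhd E y' \<subset> nbhd E y" using x unfolding private_neighbour_def by blast
      then have "nbhd E y \<subseteq> nbhd E y'"
        using bipartite_P5_free_critical.nbhd_chain[OF swap y \<open>y' \<in> Y\<close>] by blast
      then show "y' \<in> nbhd E x'" using \<open>E y x'\<close> graph_sym[OF graph] unfolding nbhd_def by blast
    qed
  next
    assume "nbhd E x \<subseteq> nbhd E x'"
    then show "E y x'" using x graph_sym[OF graph] unfolding private_neighbour_def nbhd_def by blast
  qed
  then have "nbhd E y = nbhd E (phi x)"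
    using nbhd_phi[OF \<open>x \<in> X\<close>] neighbour_of_Y[OF y] unfolding nbhd_def by blast
  then have "y = phi x"
    using prime_graph_nbhd_inj[OF graph prime] y phi_in_Y[OF \<open>x \<in> X\<close>] vertices by blast
  then show ?thesis using \<open>x \<in> X\<close> by blast
qed

lemma neighbour_of_X_phi:
  assumes "x \<in> X" "E x v"
  shows "\<exists>c\<in>X. v = phi c \<and> (x, c) \<in> nbhd_order"
proof -
  obtain c where "c \<in> X" "v = phi c" using phi_surj neighbour_of_X assms by blast
  then show ?thesis using edge_phi_iff assms unfolding nbhd_order_def by blast
qed

lemma half_graph_wrt_nbhd_order: "half_graph_wrt V E X Y nbhd_order phi"
  unfolding half_graph_wrt_def
proof (intro conjI allI disjoint vertices)
  show "nbhd_order \<subseteq> X \<times> X" unfolding nbhd_order_def by blast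
  show "linear_order_on X nbhd_order"
    unfolding linear_order_on_def partial_order_on_def preorder_on_def refl_on_def trans_def
      antisym_def total_on_def nbhd_order_def
    using prime_graph_nbhd_inj[OF graph prime] vertices nbhd_chain by blast
  show "bij_betw phi X Y"
    unfolding bij_betw_def inj_on_def using phi_inj phi_in_Y phi_surj by blast
  fix u v
  show "E u v \<longleftrightarrow> (\<exists>x\<in>X. \<exists>x'\<in>X. (x, x') \<in> nbhd_order \<and>
                         ((u = x \<and> v = phi x') \<or> (v = x \<and> u = phi x')))"
  proof
    assume "E u v"
    have "u \<in> X \<or> v \<in> X"
      using graph_vertices[OF graph \<open>E u v\<close>] independent_Y vertices \<open>E u v\<close> by blast
    then show "\<exists>x\<in>X. \<exists>x'\<in>X. (x, x') \<in> nbhd_order \<and> ((u = x \<and> v = phi x') \<or> (v = x \<and> u = phi x'))"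
      using neighbour_of_X_phi \<open>E u v\<close> graph_sym[OF graph] by blast
  next
    assume "\<exists>x\<in>X. \<exists>x'\<in>X. (x, x') \<in> nbhd_order \<and> ((u = x \<and> v = phi x') \<or> (v = x \<and> u = phi x'))"
    then show "E u v" using edge_phi_iff graph_sym[OF graph] unfolding nbhd_order_def by blast
  qed
qed

lemma discrete_half_graph: "discrete_half_graph V E"
proof -
  interpret half_graph V E X Y nbhd_order phi
    using graph half_graph_wrt_nbhd_order by unfold_locales
  have "discrete_order X nbhd_order" using critical_iff_discrete_order size critical by blast
  then show ?thesis
    unfolding discrete_half_graph_def using half_graph_wrt_nbhd_order by blast
qed

end

theorem theorem1p21:
  fixes V :: "'a set" and E :: "'a \<Rightarrow> 'a \<Rightarrow> bool"
  assumes "graph V E" and "bipartite V E" and "infinite V \<or> 4 \<le> card V"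
  shows "discrete_half_graph V E \<longleftrightarrow> (\<not> contains_induced_P5 V E \<and> critical V E)"
proof
  assume "discrete_half_graph V E"
  then obtain X Y r \<phi> where "half_graph_wrt V E X Y r \<phi>" "discrete_order X r"
    unfolding discrete_half_graph_def by blast
  then interpret half_graph V E X Y r \<phi> using assms(1) by unfold_locales
  show "\<not> contains_induced_P5 V E \<and> critical V E"
    using no_induced_P5 critical_iff_discrete_order assms(3) \<open>discrete_order X r\<close> by blast
next
  assume "\<not> contains_induced_P5 V E \<and> critical V E"
  moreover obtain X Y where "X \<inter> Y = {}" "X \<union> Y = V"
    "\<forall>u\<in>X. \<forall>v\<in>X. \<not> E u v" "\<forall>u\<in>Y. \<forall>v\<in>Y. \<not> E u v"
    using assms(2) unfolding bipartite_def by blast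
  ultimately interpret bipartite_P5_free_critical V E X Y
    using assms(1,3) by unfold_locales blast+
  show "discrete_half_graph V E" by (rule discrete_half_graph)
qed

end
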